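(* Let $f:(0,1)\to(0,1)$ be of the form $f(p)=1-\sum_{k=1}^\infty c_k(1-p)^k$ with $c_k\ge 0$ and $\sum_{k=1}^\infty c_k=1$, and let $d_k$ be as defined below. Let $p\in(0,1)$ and let $X_1,X_2,\dots$ be i.i.d. Bernoulli random variables with parameter $p$. Then the output $Y$ of Algorithm 1 (described below) satisfies $\Pr[Y=1]=f(p)$.
   Context: Coefficients: $d_k = c_k/(1-\sum_{j=1}^{k-1}c_j)$ (if $c_K>0$ and $c_k=0$ for all $k>K$, then $d_K=1$ and $d_k$ for $k>K$ is not needed). Algorithm 1: let $U_1,U_2,\dots$ be i.i.d. uniform on $(0,1)$, independent of the $X_i$. Set $i=1$. (2) Take input $X_i$. (3) Let $V_i=1$ if $U_i<d_i$ and $V_i=0$ otherwise. (4) If $V_i=1$ or $X_i=1$, output $Y=X_i$ and stop; otherwise increase $i$ by $1$ and return to step (2). The number of inputs used, $N$, is the value of $i$ at stopping. *)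

theory Defs
  imports "HOL-Probability.Probability"
begin

text \<open>When the denominator vanishes (k > K in the finitely supported case) the value
  is irrelevant for the algorithm; by Isabelle's convention it is then 0.\<close>
definition dcoef :: "(nat \<Rightarrow> real) \<Rightarrow> nat \<Rightarrow> real" where
  "dcoef c k = c k / (1 - (\<Sum>j\<in>{1..<k}. c j))"

text \<open>Algorithm 1: step i (i >= 1) stops iff V_i = 1 (i.e. U_i < d_i) or X_i = 1.\<close>
definition alg_stop_at ::
  "(nat \<Rightarrow> real) \<Rightarrow> (nat \<Rightarrow> 'a \<Rightarrow> real) \<Rightarrow> (nat \<Rightarrow> 'a \<Rightarrow> real) \<Rightarrow> nat \<Rightarrow> 'a \<Rightarrow> bool" where
  "alg_stop_at d X U i \<omega> \<longleftrightarrow> (U i \<omega> < d i \<or> X i \<omega> = 1)"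

definition alg_stops ::
  "(nat \<Rightarrow> real) \<Rightarrow> (nat \<Rightarrow> 'a \<Rightarrow> real) \<Rightarrow> (nat \<Rightarrow> 'a \<Rightarrow> real) \<Rightarrow> 'a \<Rightarrow> bool" where
  "alg_stops d X U \<omega> \<longleftrightarrow> (\<exists>i\<ge>1. alg_stop_at d X U i \<omega>)"

definition alg_N ::
  "(nat \<Rightarrow> real) \<Rightarrow> (nat \<Rightarrow> 'a \<Rightarrow> real) \<Rightarrow> (nat \<Rightarrow> 'a \<Rightarrow> real) \<Rightarrow> 'a \<Rightarrow> nat" where
  "alg_N d X U \<omega> = (LEAST i. 1 \<le> i \<and> alg_stop_at d X U i \<omega>)"

text \<open>Output Y = X_N (meaningful when the algorithm stops).\<close>
definition alg_Y ::
  "(nat \<Rightarrow> real) \<Rightarrow> (nat \<Rightarrow> 'a \<Rightarrow> real) \<Rightarrow> (nat \<Rightarrow> 'a \<Rightarrow> real) \<Rightarrow> 'a \<Rightarrow> real" where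
  "alg_Y d X U \<omega> = X (alg_N d X U \<omega>) \<omega>"

end

theory Submission
  imports Defs
begin

text \<open>The algorithm outputs 1 at step n exactly when it survives steps 1, ..., n-1 and
  X_n = 1. By independence this has probability (1-p)^(n-1) p prod_{i<n} (1 - d_i), and the
  d_k are chosen so that the product telescopes to the tail mass 1 - sum_{j<n} c_j. Summing
  over n and collecting the coefficient of each c_k (Abel summation) gives
  1 - sum_k c_k (1-p)^k = f p.\<close>

lemma prefix_sum_bounds:
  fixes c :: "nat \<Rightarrow> real"
  assumes c_nonneg: "\<forall>k\<ge>1. c k \<ge> 0" and c_sum: "(\<lambda>k. c (Suc k)) sums 1"
  shows "0 \<le> (\<Sum>j\<in>{1..<n}. c j)" "(\<Sum>j\<in>{1..<n}. c j) \<le> 1"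
proof -
  show "0 \<le> (\<Sum>j\<in>{1..<n}. c j)"
    using c_nonneg by (intro sum_nonneg) auto
  have shift: "(\<Sum>j\<in>{1..<n}. c j) = (\<Sum>k<n-1. c (Suc k))"
  proof (cases n)
    case (Suc m)
    then show ?thesis
      using sum.shift_bounds_Suc_ivl[of c 0 m] by (simp add: atLeast0LessThan)
  qed simp
  have "(\<Sum>k<n-1. c (Suc k)) \<le> (\<Sum>k. c (Suc k))"
    using c_sum c_nonneg by (intro sum_le_suminf) (auto simp: sums_iff)
  then show "(\<Sum>j\<in>{1..<n}. c j) \<le> 1"
    using shift c_sum by (simp add: sums_iff)
qed

lemma
  fixes c :: "nat \<Rightarrow> real"
  assumes c_nonneg: "\<forall>k\<ge>1. c k \<ge> 0" and c_sum: "(\<lambda>k. c (Suc k)) sums 1" and i: "i \<ge> 1"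
  shows dcoef_nonneg: "0 \<le> dcoef c i"
    and dcoef_le_one: "dcoef c i \<le> 1"
    and prefix_sum_Suc_dcoef:
      "1 - (\<Sum>j\<in>{1..<Suc i}. c j) = (1 - (\<Sum>j\<in>{1..<i}. c j)) * (1 - dcoef c i)"
proof -
  define R where "R = 1 - (\<Sum>j\<in>{1..<i}. c j)"
  have R_Suc: "1 - (\<Sum>j\<in>{1..<Suc i}. c j) = R - c i"
    using i by (simp add: R_def)
  have c_le_R: "c i \<le> R"
    using prefix_sum_bounds(2)[OF c_nonneg c_sum, of "Suc i"] R_Suc by simp
  have c_pos: "0 \<le> c i"
    using c_nonneg i by auto
  have d_eq: "dcoef c i = c i / R"
    unfolding dcoef_def R_def ..
  show "0 \<le> dcoef c i"
    using c_le_R c_pos by (simp add: d_eq)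
  show "dcoef c i \<le> 1"
    using c_le_R c_pos by (cases "R = 0") (auto simp: d_eq divide_le_eq_1)
  have "R - c i = R * (1 - dcoef c i)"
    using c_le_R c_pos by (cases "R = 0") (auto simp: d_eq field_simps)
  then show "1 - (\<Sum>j\<in>{1..<Suc i}. c j) = (1 - (\<Sum>j\<in>{1..<i}. c j)) * (1 - dcoef c i)"
    unfolding R_Suc R_def .
qed

lemma prod_one_minus_dcoef:
  fixes c :: "nat \<Rightarrow> real"
  assumes c_nonneg: "\<forall>k\<ge>1. c k \<ge> 0" and c_sum: "(\<lambda>k. c (Suc k)) sums 1"
  shows "(\<Prod>i\<in>{1..<n}. 1 - dcoef c i) = 1 - (\<Sum>j\<in>{1..<n}. c j)"
proof (induction n)
  case (Suc n)
  show ?case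
  proof (cases "n = 0")
    case False
    then have "(\<Prod>i\<in>{1..<Suc n}. 1 - dcoef c i) = (\<Prod>i\<in>{1..<n}. 1 - dcoef c i) * (1 - dcoef c n)"
      by (simp add: prod.atLeastLessThan_Suc)
    then show ?thesis
      using Suc.IH prefix_sum_Suc_dcoef[OF c_nonneg c_sum, of n] False by simp
  qed simp
qed simp

lemma tail_mass_geometric_sums:
  fixes c :: "nat \<Rightarrow> real"
  assumes c_nonneg: "\<forall>k\<ge>1. c k \<ge> 0" and c_sum: "(\<lambda>k. c (Suc k)) sums 1"
    and q: "0 \<le> q" "q < 1"
  shows "(\<lambda>n. (1 - (\<Sum>j\<in>{1..<Suc n}. c j)) * q ^ n * (1 - q))
           sums (1 - (\<Sum>k. c (Suc k) * q ^ Suc k))"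
proof -
  define R where "R n = 1 - (\<Sum>j\<in>{1..<n}. c j)" for n
  have partial: "(\<Sum>n<N. R (Suc n) * q ^ n * (1 - q))
      = 1 - (\<Sum>k<N. c (Suc k) * q ^ Suc k) - R (Suc N) * q ^ N" for N
  proof (induction N)
    case (Suc N)
    have R_Suc: "c (Suc N) + R (Suc (Suc N)) = R (Suc N)"
      by (simp add: R_def)
    show ?case
      unfolding sum.lessThan_Suc Suc.IH by (simp add: algebra_simps flip: R_Suc)
  qed (simp add: R_def)
  have summable: "summable (\<lambda>k. c (Suc k) * q ^ Suc k)"
  proof (rule summable_comparison_test[of _ "\<lambda>k. c (Suc k)"])
    show "\<exists>N. \<forall>n\<ge>N. norm (c (Suc n) * q ^ Suc n) \<le> c (Suc n)"
      using c_nonneg q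
      by (auto intro!: exI[of _ 0] mult_left_le simp: abs_mult power_le_one simp del: power_Suc)
    show "summable (\<lambda>k. c (Suc k))"
      using c_sum by (simp add: sums_iff)
  qed
  have R_bounds: "0 \<le> R n" "R n \<le> 1" for n
    using prefix_sum_bounds[OF c_nonneg c_sum, of n] by (auto simp: R_def)
  have "(\<lambda>N. R (Suc N) * q ^ N) \<longlonglongrightarrow> 0"
  proof (rule Lim_null_comparison[of _ "\<lambda>N. q ^ N"])
    show "\<forall>\<^sub>F N in sequentially. norm (R (Suc N) * q ^ N) \<le> q ^ N"
      using R_bounds q by (auto simp: abs_mult intro!: always_eventually mult_left_le_one_le)
    show "(\<lambda>N. q ^ N) \<longlonglongrightarrow> 0"
      using q by (intro LIMSEQ_power_zero) auto
  qed
  then have "(\<lambda>N. 1 - (\<Sum>k<N. c (Suc k) * q ^ Suc k) - R (Suc N) * q ^ N)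
      \<longlonglongrightarrow> 1 - (\<Sum>k. c (Suc k) * q ^ Suc k) - 0"
    by (intro tendsto_intros summable_LIMSEQ summable)
  then show ?thesis
    unfolding sums_def R_def[symmetric] partial by simp
qed

definition alg_outputs_one_at ::
  "(nat \<Rightarrow> real) \<Rightarrow> (nat \<Rightarrow> 'a \<Rightarrow> real) \<Rightarrow> (nat \<Rightarrow> 'a \<Rightarrow> real) \<Rightarrow> nat \<Rightarrow> 'a \<Rightarrow> bool" where
  "alg_outputs_one_at d X U n \<omega> \<longleftrightarrow>
     1 \<le> n \<and> X n \<omega> = 1 \<and> (\<forall>i\<in>{1..<n}. \<not> alg_stop_at d X U i \<omega>)"

lemma alg_output_one_iff:
  "alg_stops d X U \<omega> \<and> alg_Y d X U \<omega> = 1 \<longleftrightarrow> (\<exists>n. alg_outputs_one_at d X U n \<omega>)"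
proof
  assume "alg_stops d X U \<omega> \<and> alg_Y d X U \<omega> = 1"
  then have stops: "\<exists>i. 1 \<le> i \<and> alg_stop_at d X U i \<omega>" and Y: "X (alg_N d X U \<omega>) \<omega> = 1"
    by (auto simp: alg_stops_def alg_Y_def)
  have "1 \<le> alg_N d X U \<omega>"
    unfolding alg_N_def using stops by (metis (mono_tags, lifting) LeastI)
  moreover have "\<not> alg_stop_at d X U i \<omega>" if "1 \<le> i" "i < alg_N d X U \<omega>" for i
    using not_less_Least[of i "\<lambda>i. 1 \<le> i \<and> alg_stop_at d X U i \<omega>"] that
    unfolding alg_N_def by blast
  ultimately show "\<exists>n. alg_outputs_one_at d X U n \<omega>"
    using Y by (auto simp: alg_outputs_one_at_def)
next
  assume "\<exists>n. alg_outputs_one_at d X U n \<omega>"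
  then obtain n where n: "1 \<le> n" "X n \<omega> = 1" "\<forall>i\<in>{1..<n}. \<not> alg_stop_at d X U i \<omega>"
    by (auto simp: alg_outputs_one_at_def)
  then have stop_n: "alg_stop_at d X U n \<omega>"
    by (simp add: alg_stop_at_def)
  have "alg_N d X U \<omega> = n"
    unfolding alg_N_def
    by (rule Least_equality) (use n stop_n in \<open>auto simp: not_le[symmetric]\<close>)
  then show "alg_stops d X U \<omega> \<and> alg_Y d X U \<omega> = 1"
    using n stop_n by (auto simp: alg_stops_def alg_Y_def)
qed

lemma alg_outputs_one_at_unique:
  assumes "alg_outputs_one_at d X U m \<omega>" "alg_outputs_one_at d X U n \<omega>"
  shows "m = n"
proof -
  have "\<not> m < n" if "alg_outputs_one_at d X U m \<omega>" "alg_outputs_one_at d X U n \<omega>" for m n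
    using that by (auto simp: alg_outputs_one_at_def alg_stop_at_def)
  then show ?thesis
    using assms by (meson linorder_neqE_nat)
qed

context prob_space
begin

lemma indep_vars_case_sum_measurable:
  assumes "indep_vars (\<lambda>_. borel) (case_sum X U) (Inl ` I \<union> Inr ` I)" "i \<in> I"
  shows "X i \<in> borel_measurable M" "U i \<in> borel_measurable M"
proof -
  have rv: "\<forall>j\<in>Inl ` I \<union> Inr ` I. case_sum X U j \<in> borel_measurable M"
    using assms(1) by (simp add: indep_vars_def)
  show "X i \<in> borel_measurable M"
    using rv[rule_format, of "Inl i"] assms(2) by simp
  show "U i \<in> borel_measurable M"
    using rv[rule_format, of "Inr i"] assms(2) by simp
qed

lemma prob_uniform_atLeast:
  assumes V: "V \<in> borel_measurable M"
    and V_unif: "distr M lborel V = uniform_measure lborel {0<..<1}"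
    and t: "0 \<le> t" "t \<le> 1"
  shows "prob (V -` {t..} \<inter> space M) = 1 - t"
proof -
  have "prob (V -` {..<t} \<inter> space M) = measure (distr M lborel V) {..<t}"
    using V by (simp add: measure_distr)
  also have "\<dots> = measure lborel ({0<..<1} \<inter> {..<t}) / measure lborel {0<..<(1::real)}"
    unfolding V_unif by (rule measure_uniform_measure) auto
  also have "{0<..<1} \<inter> {..<t} = {0<..<t}"
    using t by auto
  finally have "prob (V -` {..<t} \<inter> space M) = t"
    using t by simp
  moreover have "V -` {t..} \<inter> space M = space M - (V -` {..<t} \<inter> space M)"
    by auto
  moreover have "V -` {..<t} \<inter> space M \<in> events"
    using V by measurable
  ultimately show ?thesis
    using prob_compl by simp
qed

lemma prob_alg_outputs_one_at:
  assumes indep: "indep_vars (\<lambda>_. borel) (case_sum X U) (Inl ` {1..} \<union> Inr ` {1..})"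
    and X_prob: "\<And>i. 1 \<le> i \<Longrightarrow> prob {\<omega>\<in>space M. X i \<omega> = 1} = p"
    and U_unif: "\<And>i. 1 \<le> i \<Longrightarrow> distr M lborel (U i) = uniform_measure lborel {0<..<1}"
    and d: "\<And>i. 1 \<le> i \<Longrightarrow> 0 \<le> d i \<and> d i \<le> 1"
    and n: "1 \<le> n"
  shows "prob {\<omega>\<in>space M. alg_outputs_one_at d X U n \<omega>}
           = (1 - p) ^ (n - 1) * p * (\<Prod>i\<in>{1..<n}. 1 - d i)"
proof -
  define J where "J = Inl ` {1..n} \<union> Inr ` {1..<n}"
  define A where "A j = (case j of Inl i \<Rightarrow> if i = n then {1} else - {1} | Inr i \<Rightarrow> {d i..})" for j
  let ?E = "\<lambda>j. case_sum X U j -` A j \<inter> space M"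
  have "{\<omega>\<in>space M. alg_outputs_one_at d X U n \<omega>} = (\<Inter>j\<in>J. ?E j)"
    using n
    by (auto simp: J_def A_def ball_Un Ball_image_comp alg_outputs_one_at_def alg_stop_at_def
        not_less; force)
  also have "prob \<dots> = (\<Prod>j\<in>J. prob (?E j))"
    using n by (intro indep_varsD[OF indep]) (auto simp: J_def A_def split: sum.split)
  also have "\<dots> = (\<Prod>i\<in>{1..n}. prob (?E (Inl i))) * (\<Prod>i\<in>{1..<n}. prob (?E (Inr i)))"
    unfolding J_def by (subst prod.union_disjoint) (auto simp: prod.reindex)
  also have "(\<Prod>i\<in>{1..n}. prob (?E (Inl i))) = p * (1 - p) ^ (n - 1)"
  proof -
    have X1: "prob (X i -` {1} \<inter> space M) = p" if "1 \<le> i" for i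
      using X_prob[OF that] by (simp add: vimage_def Int_def conj_commute)
    have "prob (X i -` (- {1}) \<inter> space M) = 1 - p" if "1 \<le> i" for i
    proof -
      have "X i -` (- {1}) \<inter> space M = space M - (X i -` {1} \<inter> space M)"
        by auto
      moreover have "X i -` {1} \<inter> space M \<in> events"
        using indep_vars_case_sum_measurable(1)[OF indep, of i] that by (simp add: measurable_sets)
      ultimately show ?thesis
        using X1[OF that] prob_compl by simp
    qed
    moreover have "{1..n} = insert n {1..<n}"
      using n by auto
    ultimately show ?thesis
      using X1[OF n] by (simp add: A_def)
  qed
  also have "(\<Prod>i\<in>{1..<n}. prob (?E (Inr i))) = (\<Prod>i\<in>{1..<n}. 1 - d i)"
    using prob_uniform_atLeast indep_vars_case_sum_measurable[OF indep] U_unif d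
    by (intro prod.cong) (auto simp: A_def)
  finally show ?thesis
    by simp
qed

lemma alg_output_one_sums:
  assumes indep: "indep_vars (\<lambda>_. borel) (case_sum X U) (Inl ` {1..} \<union> Inr ` {1..})"
    and X_prob: "\<And>i. 1 \<le> i \<Longrightarrow> prob {\<omega>\<in>space M. X i \<omega> = 1} = p"
    and U_unif: "\<And>i. 1 \<le> i \<Longrightarrow> distr M lborel (U i) = uniform_measure lborel {0<..<1}"
    and d: "\<And>i. 1 \<le> i \<Longrightarrow> 0 \<le> d i \<and> d i \<le> 1"
  shows "(\<lambda>n. (1 - p) ^ n * p * (\<Prod>i\<in>{1..<Suc n}. 1 - d i))
           sums prob {\<omega>\<in>space M. alg_stops d X U \<omega> \<and> alg_Y d X U \<omega> = 1}"
proof -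
  let ?A = "\<lambda>n. {\<omega>\<in>space M. alg_outputs_one_at d X U (Suc n) \<omega>}"
  have "{\<omega>\<in>space M. alg_stops d X U \<omega> \<and> alg_Y d X U \<omega> = 1} = (\<Union>n. ?A n)"
    unfolding alg_output_one_iff
    by (auto simp: alg_outputs_one_at_def) (metis Suc_pred less_eq_Suc_le)
  moreover have "(\<lambda>n. prob (?A n)) sums prob (\<Union>n. ?A n)"
  proof (rule finite_measure_UNION)
    show "range ?A \<subseteq> events"
      using indep_vars_case_sum_measurable[OF indep]
      unfolding alg_outputs_one_at_def alg_stop_at_def by auto
    show "disjoint_family ?A"
      using alg_outputs_one_at_unique by (fastforce simp: disjoint_family_on_def)
  qed
  moreover have "prob (?A n) = (1 - p) ^ n * p * (\<Prod>i\<in>{1..<Suc n}. 1 - d i)" for n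
    using prob_alg_outputs_one_at[OF indep X_prob U_unif d, where n = "Suc n"] by simp
  ultimately show ?thesis
    by simp
qed

end

theorem theorem1:
  fixes M :: "'a measure"
    and c :: "nat \<Rightarrow> real" and f :: "real \<Rightarrow> real" and p :: real
    and X U :: "nat \<Rightarrow> 'a \<Rightarrow> real"
  assumes c_nonneg: "\<forall>k\<ge>1. c k \<ge> 0"
    and c_sum: "(\<lambda>k. c (Suc k)) sums 1"
    and f_range: "\<forall>q\<in>{0<..<1}. f q \<in> {0<..<1}"
    and f_def: "\<forall>q\<in>{0<..<1}. f q = 1 - (\<Sum>k. c (Suc k) * (1 - q) ^ Suc k)"
    and p: "0 < p" "p < 1"
    and M: "prob_space M"
    and indep: "prob_space.indep_vars M (\<lambda>_. borel)
                  (\<lambda>i. case i of Inl n \<Rightarrow> X n | Inr n \<Rightarrow> U n)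
                  (Inl ` {1..} \<union> Inr ` {1..})"
    and X_bern: "\<forall>i\<ge>1. (\<forall>\<omega>\<in>space M. X i \<omega> \<in> {0, 1}) \<and>
                        measure M {\<omega>\<in>space M. X i \<omega> = 1} = p"
    and U_unif: "\<forall>i\<ge>1. distr M lborel (U i) = uniform_measure lborel {0<..<1}"
  shows "measure M {\<omega>\<in>space M. alg_stops (dcoef c) X U \<omega> \<and> alg_Y (dcoef c) X U \<omega> = 1} = f p"
proof -
  interpret prob_space M
    by (rule M)
  have "(\<lambda>n. (1 - p) ^ n * p * (\<Prod>i\<in>{1..<Suc n}. 1 - dcoef c i))
      sums prob {\<omega>\<in>space M. alg_stops (dcoef c) X U \<omega> \<and> alg_Y (dcoef c) X U \<omega> = 1}"
    using indep X_bern U_unif dcoef_nonneg[OF c_nonneg c_sum] dcoef_le_one[OF c_nonneg c_sum]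
    by (intro alg_output_one_sums) auto
  moreover have "(\<lambda>n. (1 - p) ^ n * p * (\<Prod>i\<in>{1..<Suc n}. 1 - dcoef c i))
      sums (1 - (\<Sum>k. c (Suc k) * (1 - p) ^ Suc k))"
    unfolding prod_one_minus_dcoef[OF c_nonneg c_sum]
    using tail_mass_geometric_sums[OF c_nonneg c_sum, of "1 - p"] p by (simp add: mult_ac)
  ultimately show ?thesis
    using f_def p sums_unique2 by fastforce
qed

end
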